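(* Let $d\in\mathbb N$, $1\le p<\infty$, $\alpha_1,\dots,\alpha_d\in\mathbb R$, and for each $i$ let $q_i=q_i(n)=p+\frac{\alpha_i+\varepsilon_i(n)}{\log n}$ where $\varepsilon_i(n)\to0$ as $n\to\infty$ and $q_i(n)\ge1$ for all $n\ge2$. Let $s_1,\dots,s_d\ge0$ and $I_\star=\{i:s_i\star e^{-\alpha_i/p^2}\}$ for $\star\in\{<,>\}$. Then, as $n\to\infty$, \[ \frac{\mathrm{vol}_n(\mathbb B_p^n\cap s_1\mathbb B_{q_1}^n\cap\dots\cap s_d\mathbb B_{q_d}^n)}{\mathrm{vol}_n(\mathbb B_p^n)}\to\begin{cases}1 & |I_>|=d,\\ 0 & |I_<|\ge1.\end{cases} \]
   Context: $\mathbb B_s^n=\{x\in\mathbb R^n:\|x\|_s\le1\}$ with $\|x\|_s=(\sum_i|x_i|^s)^{1/s}$; $\mathrm{vol}_n$ is Lebesgue measure. *)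

theory Defs
  imports "HOL-Analysis.Analysis"
begin

text \<open>Points of R^n are represented as extensional functions on the index set {..<n}
  (the carrier of the product measure lebesgue_n n below).\<close>

definition lpnorm :: "nat \<Rightarrow> real \<Rightarrow> (nat \<Rightarrow> real) \<Rightarrow> real" where
  "lpnorm n s x = (\<Sum>i<n. \<bar>x i\<bar> powr s) powr (1 / s)"

definition lpball :: "nat \<Rightarrow> real \<Rightarrow> (nat \<Rightarrow> real) set" where
  "lpball n s = {x \<in> PiE {..<n} (\<lambda>_. UNIV). lpnorm n s x \<le> 1}"

definition scale_set :: "nat \<Rightarrow> real \<Rightarrow> (nat \<Rightarrow> real) set \<Rightarrow> (nat \<Rightarrow> real) set" where
  "scale_set n t A = (\<lambda>x. \<lambda>i\<in>{..<n}. t * x i) ` A"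

abbreviation lebesgue_n :: "nat \<Rightarrow> (nat \<Rightarrow> real) measure" where
  "lebesgue_n n \<equiv> PiM {..<n} (\<lambda>_. lborel)"

definition voln :: "nat \<Rightarrow> (nat \<Rightarrow> real) set \<Rightarrow> real" where
  "voln n A = measure (lebesgue_n n) A"

end

theory Submission
  imports Defs "HOL-Real_Asymp.Real_Asymp"
begin

text \<open>
  Almost all of the volume of \<open>B\<^sub>p\<^sup>n\<close> sits on typical points \<open>x\<close>, for which
  \<open>\<parallel>x\<parallel>\<^sub>p\<^sup>p \<ge> \<rho>\<^sub>n\<^sup>p\<close> with \<open>\<rho>\<^sub>n = exp (-1/\<surd>n)\<close> and every coordinate satisfies
  \<open>\<bar>x\<^sub>j\<bar>\<^sup>p \<le> (2p+2) log n / (n-1)\<close>: by scaling, the points of small norm carry at most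
  \<open>\<rho>\<^sub>n\<^sup>n\<close> of the volume, and a coordinatewise rescaling that maps a coordinate tail of
  \<open>B\<^sub>p\<^sup>n\<close> into a cylinder over \<open>B\<^sub>p\<^sup>n\<^sup>-\<^sup>1\<close>, and that cylinder back into \<open>B\<^sub>p\<^sup>n\<close>, bounds
  each tail by \<open>O(1/n\<^sup>2)\<close>.

  On typical points the \<open>\<ell>\<^sub>q\<close>-sum is comparable with the \<open>\<ell>\<^sub>p\<close>-sum: for \<open>q \<ge> p\<close>
  through \<open>\<Sum>\<bar>x\<^sub>j\<bar>\<^sup>q \<le> (max \<bar>x\<^sub>j\<bar>)\<^sup>q\<^sup>-\<^sup>p \<Sum>\<bar>x\<^sub>j\<bar>\<^sup>p\<close>, for \<open>q < p\<close> through the power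
  mean inequality \<open>\<Sum>\<bar>x\<^sub>j\<bar>\<^sup>q \<le> n\<^sup>1\<^sup>-\<^sup>q\<^sup>/\<^sup>p (\<Sum>\<bar>x\<^sub>j\<bar>\<^sup>p)\<^sup>q\<^sup>/\<^sup>p\<close>, and symmetrically
  in the other direction. For \<open>q = p + (\<alpha> + \<epsilon>)/log n\<close> all the resulting factors
  tend to \<open>e\<^sup>-\<^sup>\<alpha>\<^sup>/\<^sup>p\<close>, so a typical point lies in \<open>s B\<^sub>q\<^sup>n\<close> when \<open>s\<^sup>p > e\<^sup>-\<^sup>\<alpha>\<^sup>/\<^sup>p\<close>
  and outside it when \<open>s\<^sup>p < e\<^sup>-\<^sup>\<alpha>\<^sup>/\<^sup>p\<close>.
\<close>

section \<open>Coordinatewise scaling of Lebesgue measure\<close>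

lemma emeasure_lborel_scale:
  fixes c :: real
  assumes "c > 0" and A: "A \<in> sets borel"
  shows "emeasure lborel A = ennreal c * emeasure lborel {y. c * y \<in> A}"
proof -
  have "emeasure lborel A = emeasure (density (distr lborel borel ((*) c)) (\<lambda>_. ennreal \<bar>c\<bar>)) A"
    using lborel_distr_mult'[of c] assms by simp
  also have "\<dots> = ennreal c * emeasure (distr lborel borel ((*) c)) A"
    using assms by (subst emeasure_density_const) auto
  also have "emeasure (distr lborel borel ((*) c)) A = emeasure lborel ((*) c -` A \<inter> space lborel)"
    using A by (subst emeasure_distr) auto
  also have "(*) c -` A \<inter> space lborel = {y. c * y \<in> A}"
    by auto
  finally show ?thesis .
qed

lemma density_distr_PiM_lborel_scale:
  fixes c :: "nat \<Rightarrow> real"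
  assumes c: "\<And>i. i < n \<Longrightarrow> c i > 0"
  shows "density (distr (lebesgue_n n) (lebesgue_n n) (\<lambda>x. \<lambda>i\<in>{..<n}. c i * x i))
      (\<lambda>_. ennreal (\<Prod>i<n. c i)) = lebesgue_n n"
    (is "density (distr _ _ ?D) (\<lambda>_. ?K) = _")
proof -
  interpret ps: product_sigma_finite "\<lambda>_::nat. lborel :: real measure" by standard
  have D: "?D \<in> measurable (lebesgue_n n) (lebesgue_n n)"
    by measurable
  show ?thesis
  proof (rule ps.PiM_eqI)
    fix B :: "nat \<Rightarrow> real set"
    assume B: "\<And>i. i \<in> {..<n} \<Longrightarrow> B i \<in> sets lborel"
    have PB: "Pi\<^sub>E {..<n} B \<in> sets (lebesgue_n n)"
      using B by (intro sets_PiM_I_finite) auto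
    have preimage: "?D -` Pi\<^sub>E {..<n} B \<inter> space (lebesgue_n n) = Pi\<^sub>E {..<n} (\<lambda>i. {y. c i * y \<in> B i})"
      by (auto simp: space_PiM PiE_def Pi_def extensional_def)
    have B_scaled: "{y. c i * y \<in> B i} \<in> sets lborel" if "i < n" for i
    proof -
      have "{y. c i * y \<in> B i} = (\<lambda>y. c i * y) -` B i \<inter> space lborel"
        by auto
      also have "\<dots> \<in> sets lborel"
        using B that by (intro measurable_sets[of _ lborel lborel]) auto
      finally show ?thesis .
    qed
    have "emeasure (density (distr (lebesgue_n n) (lebesgue_n n) ?D) (\<lambda>_. ?K)) (Pi\<^sub>E {..<n} B)
        = ?K * emeasure (lebesgue_n n) (Pi\<^sub>E {..<n} (\<lambda>i. {y. c i * y \<in> B i}))"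
      using PB D by (simp add: emeasure_density_const emeasure_distr preimage)
    also have "\<dots> = ?K * (\<Prod>i<n. emeasure lborel {y. c i * y \<in> B i})"
      using B_scaled by (subst ps.emeasure_PiM) auto
    also have "\<dots> = (\<Prod>i<n. ennreal (c i) * emeasure lborel {y. c i * y \<in> B i})"
      using c by (subst prod_ennreal[symmetric]) (auto intro: less_imp_le simp: prod.distrib)
    also have "\<dots> = (\<Prod>i<n. emeasure lborel (B i))"
      using B c by (intro prod.cong refl emeasure_lborel_scale[symmetric]) auto
    finally show "emeasure (density (distr (lebesgue_n n) (lebesgue_n n) ?D) (\<lambda>_. ?K)) (Pi\<^sub>E {..<n} B)
        = (\<Prod>i\<in>{..<n}. emeasure lborel (B i))"
      by simp
  qed simp_all
qed

lemma emeasure_PiM_lborel_scale: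
  fixes c :: "nat \<Rightarrow> real"
  assumes c: "\<And>i. i < n \<Longrightarrow> c i > 0" and A: "A \<in> sets (lebesgue_n n)"
  shows "emeasure (lebesgue_n n) A = ennreal (\<Prod>i<n. c i) *
     emeasure (lebesgue_n n) {x \<in> space (lebesgue_n n). (\<lambda>i\<in>{..<n}. c i * x i) \<in> A}"
proof -
  let ?D = "\<lambda>x::nat\<Rightarrow>real. \<lambda>i\<in>{..<n}. c i * x i"
  have D: "?D \<in> measurable (lebesgue_n n) (lebesgue_n n)"
    by measurable
  have "emeasure (lebesgue_n n) A
      = emeasure (density (distr (lebesgue_n n) (lebesgue_n n) ?D) (\<lambda>_. ennreal (\<Prod>i<n. c i))) A"
    by (simp only: density_distr_PiM_lborel_scale[OF c])
  also have "\<dots> = ennreal (\<Prod>i<n. c i) * emeasure (distr (lebesgue_n n) (lebesgue_n n) ?D) A"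
    using A by (simp add: emeasure_density_const)
  also have "emeasure (distr (lebesgue_n n) (lebesgue_n n) ?D) A
      = emeasure (lebesgue_n n) (?D -` A \<inter> space (lebesgue_n n))"
    by (rule emeasure_distr[OF D A])
  also have "?D -` A \<inter> space (lebesgue_n n) = {x \<in> space (lebesgue_n n). ?D x \<in> A}"
    by auto
  finally show ?thesis .
qed

lemma emeasure_PiM_lborel_scale_preimage:
  fixes c :: "nat \<Rightarrow> real"
  assumes c: "\<And>i. i < n \<Longrightarrow> c i > 0" and A: "A \<in> sets (lebesgue_n n)"
  shows "emeasure (lebesgue_n n) {x \<in> space (lebesgue_n n). (\<lambda>i\<in>{..<n}. c i * x i) \<in> A}
     = ennreal (1 / (\<Prod>i<n. c i)) * emeasure (lebesgue_n n) A"
proof -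
  define P where "P = (\<Prod>i<n. c i)"
  have "P > 0"
    unfolding P_def using c by (intro prod_pos) auto
  then have "ennreal (1 / P) * ennreal P = 1"
    by (simp flip: ennreal_mult)
  moreover have "emeasure (lebesgue_n n) A = ennreal P *
     emeasure (lebesgue_n n) {x \<in> space (lebesgue_n n). (\<lambda>i\<in>{..<n}. c i * x i) \<in> A}"
    unfolding P_def by (rule emeasure_PiM_lborel_scale[OF c A])
  ultimately show ?thesis
    by (simp add: mult.assoc[symmetric] flip: P_def)
qed

lemma sets_PiM_scale_preimage:
  fixes c :: "nat \<Rightarrow> real"
  assumes [measurable]: "A \<in> sets (lebesgue_n n)"
  shows "{x \<in> space (lebesgue_n n). (\<lambda>i\<in>{..<n}. c i * x i) \<in> A} \<in> sets (lebesgue_n n)"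
  by measurable

lemma emeasure_PiM_lborel_cube:
  "emeasure (lebesgue_n n) (Pi\<^sub>E {..<n} (\<lambda>_. {a..b::real})) = ennreal ((max 0 (b - a)) ^ n)"
proof -
  interpret ps: product_sigma_finite "\<lambda>_::nat. lborel :: real measure" by standard
  have "emeasure (lebesgue_n n) (Pi\<^sub>E {..<n} (\<lambda>_. {a..b::real})) = (\<Prod>i<n. emeasure lborel {a..b})"
    by (subst ps.emeasure_PiM) auto
  also have "\<dots> = (\<Prod>i<n. ennreal (max 0 (b - a)))"
    by (intro prod.cong) (auto simp: max_def)
  finally show ?thesis
    by (simp add: ennreal_power)
qed

lemma measure_le_mult_of_emeasure_le:
  assumes "emeasure M A \<le> ennreal c * emeasure M B" "B \<in> fmeasurable M" "0 \<le> c"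
  shows "measure M A \<le> c * measure M B"
proof -
  have "emeasure M A \<le> ennreal (c * measure M B)"
    using assms by (simp add: emeasure_eq_measure2 ennreal_mult)
  then show ?thesis
    unfolding measure_def using assms by (intro enn2real_leI) auto
qed

lemma measure_le_of_subset_fmeasurable:
  "A \<subseteq> B \<Longrightarrow> B \<in> fmeasurable M \<Longrightarrow> measure M A \<le> measure M B"
  by (cases "A \<in> sets M") (auto intro: measure_mono_fmeasurable simp: measure_notin_sets)

definition lp_sum :: "nat \<Rightarrow> real \<Rightarrow> (nat \<Rightarrow> real) \<Rightarrow> real" where
  "lp_sum n r x = (\<Sum>i<n. \<bar>x i\<bar> powr r)"

lemma space_lebesgue_n: "space (lebesgue_n n) = PiE {..<n} (\<lambda>_. UNIV)"
  by (simp add: space_PiM)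

lemma lp_sum_measurable [measurable]: "lp_sum n r \<in> borel_measurable (lebesgue_n n)"
  unfolding lp_sum_def by measurable

lemma lp_sum_nonneg: "lp_sum n r x \<ge> 0"
  unfolding lp_sum_def by (auto intro!: sum_nonneg)

lemma lp_sum_restrict [simp]: "lp_sum n r (restrict x {..<n}) = lp_sum n r x"
  unfolding lp_sum_def by simp

lemma lp_sum_scale: "lp_sum n r (\<lambda>i. t * x i) = \<bar>t\<bar> powr r * lp_sum n r x"
  unfolding lp_sum_def by (simp add: abs_mult powr_mult sum_distrib_left)

lemma lp_sum_remove:
  "j < n \<Longrightarrow> lp_sum n r x = \<bar>x j\<bar> powr r + (\<Sum>i\<in>{..<n}-{j}. \<bar>x i\<bar> powr r)"
  unfolding lp_sum_def by (subst sum.remove[of _ j]) auto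

lemma lp_sum_add_exponent_le:
  assumes b: "0 \<le> b" and x: "\<And>j. j < n \<Longrightarrow> \<bar>x j\<bar> \<le> m"
  shows "lp_sum n (r + b) x \<le> m powr b * lp_sum n r x"
  unfolding lp_sum_def sum_distrib_left
proof (intro sum_mono)
  fix i
  assume i: "i \<in> {..<n}"
  show "\<bar>x i\<bar> powr (r + b) \<le> m powr b * \<bar>x i\<bar> powr r"
  proof (cases "x i = 0")
    case False
    then have "\<bar>x i\<bar> powr (r + b) = \<bar>x i\<bar> powr b * \<bar>x i\<bar> powr r"
      by (simp add: powr_add)
    also have "\<dots> \<le> m powr b * \<bar>x i\<bar> powr r"
      using x[of i] i b by (intro mult_right_mono powr_mono2) auto
    finally show ?thesis .
  qed simp
qed

lemma power_mean_inequality: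
  fixes y :: "'a \<Rightarrow> real"
  assumes fin: "finite I" and "I \<noteq> {}" and ab: "0 < a" "a \<le> b"
    and y: "\<And>i. i \<in> I \<Longrightarrow> y i \<ge> 0"
  shows "(\<Sum>i\<in>I. y i powr a) \<le> real (card I) powr (1 - a/b) * (\<Sum>i\<in>I. y i powr b) powr (a/b)"
proof -
  define T where "T = (\<Sum>i\<in>I. y i powr b)"
  define N where "N = real (card I)"
  define \<theta> where "\<theta> = a / b"
  have \<theta>: "0 < \<theta>" "\<theta> \<le> 1"
    using ab by (auto simp: \<theta>_def)
  have N: "N > 0"
    using fin \<open>I \<noteq> {}\<close> by (simp add: N_def card_gt_0_iff)
  show ?thesis
  proof (cases "T = 0")
    case True
    then have "\<forall>i\<in>I. y i = 0"
      using fin y unfolding T_def by (subst (asm) sum_nonneg_eq_0_iff) auto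
    then show ?thesis
      by simp
  next
    case False
    then have T: "T > 0"
      unfolding T_def by (metis less_eq_real_def powr_ge_zero sum_nonneg)
    define w where "w i = N * y i powr b / T" for i
    have w: "w i \<ge> 0" for i
      unfolding w_def using N T by auto
    have sum_w: "(\<Sum>i\<in>I. w i) = N"
      unfolding w_def using T
      by (simp add: sum_divide_distrib[symmetric] sum_distrib_left[symmetric] T_def[symmetric])
    \<comment> \<open>Young's inequality \<open>w\<^sup>\<theta> \<le> \<theta> w + (1 - \<theta>)\<close> applied to the normalised weights\<close>
    have "y i powr a \<le> (T/N) powr \<theta> * (\<theta> * w i + (1 - \<theta>))" if "i \<in> I" for i
    proof -
      have "y i powr a = ((T/N) * w i) powr \<theta>"
        unfolding w_def using ab N T by (simp add: powr_powr \<theta>_def)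
      also have "\<dots> = (T/N) powr \<theta> * w i powr \<theta>"
        using N T w by (subst powr_mult) auto
      also have "w i powr \<theta> \<le> \<theta> * w i + (1 - \<theta>)"
        using Youngs_inequality_0[of \<theta> "1 - \<theta>" "w i" 1] w[of i] \<theta>
        by (cases "w i = 0") auto
      finally show ?thesis
        by (simp add: mult_left_mono)
    qed
    then have "(\<Sum>i\<in>I. y i powr a) \<le> (\<Sum>i\<in>I. (T/N) powr \<theta> * (\<theta> * w i + (1 - \<theta>)))"
      by (intro sum_mono)
    also have "\<dots> = (T/N) powr \<theta> * (\<theta> * N + (1 - \<theta>) * N)"
      by (simp add: sum_distrib_left[symmetric] sum.distrib sum_distrib_left[of \<theta>, symmetric] sum_w N_def)
    also have "\<dots> = N powr (1 - \<theta>) * T powr \<theta>"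
      using N T by (simp add: powr_divide powr_diff algebra_simps)
    finally show ?thesis
      unfolding N_def T_def \<theta>_def .
  qed
qed

lemma lp_sum_power_mean:
  "0 < a \<Longrightarrow> a \<le> b \<Longrightarrow> 0 < n \<Longrightarrow> lp_sum n a x \<le> real n powr (1 - a/b) * lp_sum n b x powr (a/b)"
  using power_mean_inequality[of "{..<n}" a b "\<lambda>i. \<bar>x i\<bar>"] unfolding lp_sum_def
  by (simp add: lessThan_empty_iff)

lemma powr_le_one_iff: "0 \<le> (x::real) \<Longrightarrow> e > 0 \<Longrightarrow> x powr e \<le> 1 \<longleftrightarrow> x \<le> 1"
proof
  assume "0 \<le> x" "e > 0" "x powr e \<le> 1"
  then show "x \<le> 1"
    by (metis not_le powr_less_mono2 powr_one_eq_one zero_le_one)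
qed (simp add: powr_le1)

lemma lpball_conv_lp_sum: "r > 0 \<Longrightarrow> lpball n r = {x \<in> space (lebesgue_n n). lp_sum n r x \<le> 1}"
  unfolding lpball_def lpnorm_def space_lebesgue_n lp_sum_def[symmetric]
  using lp_sum_nonneg by (auto simp: powr_le_one_iff)

lemma sets_lpball: "r > 0 \<Longrightarrow> lpball n r \<in> sets (lebesgue_n n)"
  by (simp add: lpball_conv_lp_sum)

lemma scale_set_lpball_conv_lp_sum:
  assumes "0 < t" "r > 0"
  shows "scale_set n t (lpball n r) = {x \<in> space (lebesgue_n n). lp_sum n r x \<le> t powr r}"
proof safe
  fix x
  assume "x \<in> scale_set n t (lpball n r)"
  then obtain y where y: "y \<in> lpball n r" and x: "x = (\<lambda>i\<in>{..<n}. t * y i)"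
    unfolding scale_set_def by auto
  have "lp_sum n r y \<le> 1"
    using y assms by (simp add: lpball_conv_lp_sum)
  then show "lp_sum n r x \<le> t powr r"
    using assms x by (simp add: lp_sum_scale mult_left_le)
  show "x \<in> space (lebesgue_n n)"
    using x by (simp add: space_lebesgue_n)
next
  fix x
  assume x: "x \<in> space (lebesgue_n n)" "lp_sum n r x \<le> t powr r"
  define y where "y = (\<lambda>i\<in>{..<n}. (1/t) * x i)"
  have "lp_sum n r y = (1/t) powr r * lp_sum n r x"
    unfolding y_def lp_sum_restrict lp_sum_scale using assms by simp
  also have "\<dots> \<le> (1/t) powr r * t powr r"
    using x by (intro mult_left_mono) auto
  also have "\<dots> = 1"
    using assms by (simp add: powr_divide)
  finally have "y \<in> lpball n r"
    using assms by (simp add: lpball_conv_lp_sum y_def space_lebesgue_n)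
  moreover have "x = (\<lambda>i\<in>{..<n}. t * y i)"
    using x assms by (auto simp: y_def space_lebesgue_n PiE_def extensional_def)
  ultimately show "x \<in> scale_set n t (lpball n r)"
    unfolding scale_set_def by blast
qed

lemma lp_sum_le_of_mem_scale_set:
  assumes "0 \<le> t" "r > 0" "x \<in> scale_set n t (lpball n r)"
  shows "lp_sum n r x \<le> t powr r"
proof (cases "t = 0")
  case True
  then have "x = (\<lambda>i\<in>{..<n}. 0)"
    using assms(3) by (auto simp: scale_set_def)
  then show ?thesis
    using True assms(2) by (simp add: lp_sum_def)
qed (use assms scale_set_lpball_conv_lp_sum in auto)

lemma lpball_subset_cube: "1 \<le> p \<Longrightarrow> lpball n p \<subseteq> Pi\<^sub>E {..<n} (\<lambda>_. {-1..1::real})"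
proof
  fix x
  assume p: "1 \<le> p" and x: "x \<in> lpball n p"
  then have lp: "lp_sum n p x \<le> 1"
    by (simp add: lpball_conv_lp_sum)
  have "\<bar>x i\<bar> \<le> 1" if "i < n" for i
  proof -
    have "\<bar>x i\<bar> powr p \<le> lp_sum n p x"
      unfolding lp_sum_def using that by (intro member_le_sum) auto
    then show ?thesis
      using lp p powr_le_one_iff[of "\<bar>x i\<bar>" p] by simp
  qed
  then show "x \<in> Pi\<^sub>E {..<n} (\<lambda>_. {-1..1})"
    using x p by (auto simp: lpball_conv_lp_sum space_lebesgue_n PiE_def abs_le_iff)
qed

lemma fmeasurable_lpball: "1 \<le> p \<Longrightarrow> lpball n p \<in> fmeasurable (lebesgue_n n)"
proof -
  assume p: "1 \<le> p"
  have "emeasure (lebesgue_n n) (lpball n p) \<le> emeasure (lebesgue_n n) (Pi\<^sub>E {..<n} (\<lambda>_. {-1..1::real}))"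
    using lpball_subset_cube[OF p] by (intro emeasure_mono) (auto intro!: sets_PiM_I_finite)
  also have "\<dots> < \<infinity>"
    by (simp add: emeasure_PiM_lborel_cube)
  finally show ?thesis
    using p sets_lpball[of p n] by (auto simp: fmeasurable_def)
qed

lemma measure_lpball_pos: "1 \<le> p \<Longrightarrow> 0 < measure (lebesgue_n n) (lpball n p)"
proof -
  assume p: "1 \<le> p"
  define e where "e = 1 / real (Suc n)"
  have e: "0 < e" "e \<le> 1"
    by (auto simp: e_def)
  have "Pi\<^sub>E {..<n} (\<lambda>_. {-e..e}) \<subseteq> lpball n p"
  proof
    fix x
    assume x: "x \<in> Pi\<^sub>E {..<n} (\<lambda>_. {-e..e})"
    have "lp_sum n p x \<le> (\<Sum>i<n. e)"
      unfolding lp_sum_def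
    proof (intro sum_mono)
      fix i
      assume "i \<in> {..<n}"
      then have "\<bar>x i\<bar> \<le> e"
        using x by (auto simp: PiE_def Pi_def)
      then have "\<bar>x i\<bar> powr p \<le> e powr p"
        using p by (intro powr_mono2) auto
      also have "\<dots> \<le> e"
        using e p by (intro powr_le_one_le) auto
      finally show "\<bar>x i\<bar> powr p \<le> e" .
    qed
    also have "\<dots> \<le> 1"
      by (simp add: e_def field_simps)
    finally show "x \<in> lpball n p"
      using x p by (auto simp: lpball_conv_lp_sum space_lebesgue_n PiE_def)
  qed
  then have "emeasure (lebesgue_n n) (Pi\<^sub>E {..<n} (\<lambda>_. {-e..e})) \<le> emeasure (lebesgue_n n) (lpball n p)"
    using p by (intro emeasure_mono sets_lpball) auto
  moreover have "0 < emeasure (lebesgue_n n) (Pi\<^sub>E {..<n} (\<lambda>_. {-e..e}))"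
    using e by (simp add: emeasure_PiM_lborel_cube)
  ultimately have "0 < emeasure (lebesgue_n n) (lpball n p)"
    by order
  then show ?thesis
    using fmeasurable_lpball[OF p] by (simp add: emeasure_eq_measure2)
qed

section \<open>The volume of atypical points of \<open>B\<^sub>p\<^sup>n\<close>\<close>

lemma measure_lpball_small_lp_sum_le:
  assumes p: "1 \<le> p" and \<rho>: "0 < \<rho>"
  shows "measure (lebesgue_n n) {x \<in> lpball n p. lp_sum n p x < \<rho> powr p}
    \<le> \<rho> ^ n * measure (lebesgue_n n) (lpball n p)"
proof -
  let ?M = "lebesgue_n n"
  have "{x \<in> lpball n p. lp_sum n p x < \<rho> powr p}
      \<subseteq> {x \<in> space ?M. (\<lambda>i\<in>{..<n}. (1/\<rho>) * x i) \<in> lpball n p}"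
  proof safe
    fix x
    assume x: "x \<in> lpball n p" "lp_sum n p x < \<rho> powr p"
    then show "x \<in> space ?M"
      using p by (simp add: lpball_conv_lp_sum)
    have "lp_sum n p (\<lambda>i\<in>{..<n}. (1/\<rho>) * x i) = (1/\<rho>) powr p * lp_sum n p x"
      using lp_sum_scale[of n p "1/\<rho>" x] \<rho> by simp
    also have "\<dots> \<le> (1/\<rho>) powr p * \<rho> powr p"
      using x by (intro mult_left_mono) auto
    also have "\<dots> = 1"
      using \<rho> by (simp add: powr_divide)
    finally show "(\<lambda>i\<in>{..<n}. (1/\<rho>) * x i) \<in> lpball n p"
      using p by (simp add: lpball_conv_lp_sum space_lebesgue_n)
  qed
  then have "emeasure ?M {x \<in> lpball n p. lp_sum n p x < \<rho> powr p}
      \<le> emeasure ?M {x \<in> space ?M. (\<lambda>i\<in>{..<n}. (1/\<rho>) * x i) \<in> lpball n p}"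
    using p by (intro emeasure_mono sets_PiM_scale_preimage sets_lpball) auto
  also have "\<dots> = ennreal (\<rho> ^ n) * emeasure ?M (lpball n p)"
    using \<rho> p by (subst emeasure_PiM_lborel_scale_preimage) (auto intro: sets_lpball simp: power_one_over)
  finally show ?thesis
    using p \<rho> by (intro measure_le_mult_of_emeasure_le fmeasurable_lpball) auto
qed

definition lp_cylinder :: "nat \<Rightarrow> real \<Rightarrow> nat \<Rightarrow> (nat \<Rightarrow> real) set" where
  "lp_cylinder n p j =
     {y \<in> space (lebesgue_n n). \<bar>y j\<bar> \<le> 1 \<and> (\<Sum>i\<in>{..<n}-{j}. \<bar>y i\<bar> powr p) \<le> 1}"

lemma sets_lp_cylinder: "j < n \<Longrightarrow> lp_cylinder n p j \<in> sets (lebesgue_n n)"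
  unfolding lp_cylinder_def by measurable

lemma sum_scale_off_coordinate:
  fixes c x :: "nat \<Rightarrow> real"
  assumes "\<And>i. i \<noteq> j \<Longrightarrow> c i = t" "t > 0"
  shows "(\<Sum>i\<in>{..<n}-{j}. \<bar>c i * x i\<bar> powr p) = t powr p * (\<Sum>i\<in>{..<n}-{j}. \<bar>x i\<bar> powr p)"
proof -
  have "\<bar>t * y\<bar> powr p = t powr p * \<bar>y\<bar> powr p" for y
    using assms(2) by (simp add: abs_mult powr_mult)
  then show ?thesis
    unfolding sum_distrib_left using assms(1) by (intro sum.cong) auto
qed

lemma lpball_tail_subset_cylinder_preimage:
  assumes p: "1 \<le> p" and j: "j < n" and m: "0 < m"
    and \<kappa>: "0 < \<kappa>" "\<kappa> powr p * (1 - m powr p) \<le> 1"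
  shows "{x \<in> lpball n p. m < \<bar>x j\<bar>}
    \<subseteq> {x \<in> space (lebesgue_n n). (\<lambda>i\<in>{..<n}. (if i = j then 1 else \<kappa>) * x i) \<in> lp_cylinder n p j}"
proof safe
  fix x
  assume x: "x \<in> lpball n p" "m < \<bar>x j\<bar>"
  then have lp: "lp_sum n p x \<le> 1"
    using p by (simp add: lpball_conv_lp_sum)
  have "m powr p < \<bar>x j\<bar> powr p"
    using x m p by (intro powr_less_mono2) auto
  then have rest: "(\<Sum>i\<in>{..<n}-{j}. \<bar>x i\<bar> powr p) \<le> 1 - m powr p"
    using lp lp_sum_remove[OF j, of p x] by linarith
  have "\<bar>x j\<bar> powr p \<le> 1"
    using lp lp_sum_remove[OF j, of p x] sum_nonneg[of "{..<n}-{j}" "\<lambda>i. \<bar>x i\<bar> powr p"] by simp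
  then have "\<bar>x j\<bar> \<le> 1"
    using p powr_le_one_iff[of "\<bar>x j\<bar>" p] by simp
  moreover have "(\<Sum>i\<in>{..<n}-{j}. \<bar>(if i = j then 1 else \<kappa>) * x i\<bar> powr p)
      = \<kappa> powr p * (\<Sum>i\<in>{..<n}-{j}. \<bar>x i\<bar> powr p)"
    using \<kappa> by (intro sum_scale_off_coordinate) auto
  moreover have "\<kappa> powr p * (\<Sum>i\<in>{..<n}-{j}. \<bar>x i\<bar> powr p) \<le> \<kappa> powr p * (1 - m powr p)"
    using rest by (intro mult_left_mono) auto
  ultimately show "(\<lambda>i\<in>{..<n}. (if i = j then 1 else \<kappa>) * x i) \<in> lp_cylinder n p j"
    using j \<kappa>(2) by (simp add: lp_cylinder_def space_lebesgue_n)
  show "x \<in> space (lebesgue_n n)"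
    using x p by (simp add: lpball_conv_lp_sum)
qed

lemma emeasure_lpball_tail_le_cylinder:
  assumes p: "1 \<le> p" and j: "j < n" and m: "0 < m"
    and \<kappa>: "0 < \<kappa>" "\<kappa> powr p * (1 - m powr p) \<le> 1"
  shows "emeasure (lebesgue_n n) {x \<in> lpball n p. m < \<bar>x j\<bar>}
    \<le> ennreal (1 / \<kappa> ^ (n - 1)) * emeasure (lebesgue_n n) (lp_cylinder n p j)"
proof -
  let ?M = "lebesgue_n n" and ?c = "\<lambda>i. if i = j then 1 else \<kappa>"
  have "emeasure ?M {x \<in> lpball n p. m < \<bar>x j\<bar>}
      \<le> emeasure ?M {x \<in> space ?M. (\<lambda>i\<in>{..<n}. ?c i * x i) \<in> lp_cylinder n p j}"
    using j lpball_tail_subset_cylinder_preimage[OF p j m \<kappa>]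
    by (intro emeasure_mono sets_PiM_scale_preimage sets_lp_cylinder)
  also have "\<dots> = ennreal (1 / (\<Prod>i<n. ?c i)) * emeasure ?M (lp_cylinder n p j)"
    using \<kappa> j by (intro emeasure_PiM_lborel_scale_preimage sets_lp_cylinder) auto
  also have "(\<Prod>i<n. ?c i) = \<kappa> ^ (n - 1)"
    using j by (simp add: prod.If_cases Int_absorb1 flip: Diff_eq)
  finally show ?thesis .
qed

lemma cylinder_preimage_subset_lpball:
  assumes p: "1 \<le> p" and j: "j < n" and a: "0 < a"
    and \<mu>: "0 < \<mu>" "1 \<le> \<mu> powr p * (1 - a powr p)"
  shows "{x \<in> space (lebesgue_n n). (\<lambda>i\<in>{..<n}. (if i = j then 1 / a else \<mu>) * x i) \<in> lp_cylinder n p j}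
    \<subseteq> lpball n p"
proof safe
  fix x
  assume x: "x \<in> space (lebesgue_n n)"
    and cyl: "(\<lambda>i\<in>{..<n}. (if i = j then 1 / a else \<mu>) * x i) \<in> lp_cylinder n p j"
  have "\<bar>x j / a\<bar> \<le> 1" and sum_le: "(\<Sum>i\<in>{..<n}-{j}. \<bar>(if i = j then 1 / a else \<mu>) * x i\<bar> powr p) \<le> 1"
    using cyl j by (simp_all add: lp_cylinder_def)
  then have "\<bar>x j\<bar> \<le> a"
    using a by (simp add: field_simps)
  then have xj: "\<bar>x j\<bar> powr p \<le> a powr p"
    using p by (intro powr_mono2) auto
  have "(\<Sum>i\<in>{..<n}-{j}. \<bar>(if i = j then 1 / a else \<mu>) * x i\<bar> powr p)
      = \<mu> powr p * (\<Sum>i\<in>{..<n}-{j}. \<bar>x i\<bar> powr p)"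
    using \<mu> by (intro sum_scale_off_coordinate) auto
  then have "\<mu> powr p * (\<Sum>i\<in>{..<n}-{j}. \<bar>x i\<bar> powr p) \<le> \<mu> powr p * (1 - a powr p)"
    using sum_le \<mu> by linarith
  then have "(\<Sum>i\<in>{..<n}-{j}. \<bar>x i\<bar> powr p) \<le> 1 - a powr p"
    using \<mu> by simp
  then have "lp_sum n p x \<le> 1"
    using lp_sum_remove[OF j, of p x] xj by linarith
  then show "x \<in> lpball n p"
    using x p by (simp add: lpball_conv_lp_sum)
qed

lemma emeasure_cylinder_le_lpball:
  assumes p: "1 \<le> p" and j: "j < n" and a: "0 < a"
    and \<mu>: "0 < \<mu>" "1 \<le> \<mu> powr p * (1 - a powr p)"
  shows "emeasure (lebesgue_n n) (lp_cylinder n p j)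
    \<le> ennreal (\<mu> ^ (n - 1) / a) * emeasure (lebesgue_n n) (lpball n p)"
proof -
  let ?M = "lebesgue_n n" and ?c = "\<lambda>i. if i = j then 1 / a else \<mu>"
  have "ennreal (1 / (\<Prod>i<n. ?c i)) * emeasure ?M (lp_cylinder n p j) \<le> emeasure ?M (lpball n p)"
    using a \<mu> j p cylinder_preimage_subset_lpball[OF p j a \<mu>]
    by (subst emeasure_PiM_lborel_scale_preimage[symmetric])
       (auto intro!: emeasure_mono sets_lp_cylinder sets_lpball)
  moreover have "(\<Prod>i<n. ?c i) = \<mu> ^ (n - 1) / a"
    using j by (simp add: prod.If_cases Int_absorb1 flip: Diff_eq)
  ultimately have "ennreal (\<mu> ^ (n - 1) / a) * (ennreal (a / \<mu> ^ (n - 1)) * emeasure ?M (lp_cylinder n p j))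
      \<le> ennreal (\<mu> ^ (n - 1) / a) * emeasure ?M (lpball n p)"
    by (simp add: mult_left_mono)
  moreover have "ennreal (\<mu> ^ (n - 1) / a) * ennreal (a / \<mu> ^ (n - 1)) = 1"
    using a \<mu> by (simp flip: ennreal_mult)
  ultimately show ?thesis
    by (simp add: mult.assoc[symmetric])
qed

lemma measure_lpball_tail_le:
  assumes p: "1 \<le> p" and j: "j < n"
    and m: "0 < m" "m powr p < 1" and a: "0 < a" "a powr p < 1"
  shows "measure (lebesgue_n n) {x \<in> lpball n p. m < \<bar>x j\<bar>}
     \<le> ((1 - m powr p) / (1 - a powr p)) powr ((real n - 1) / p) / a
        * measure (lebesgue_n n) (lpball n p)"
proof -
  define \<kappa> where "\<kappa> = (1 / (1 - m powr p)) powr (1/p)"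
  define \<mu> where "\<mu> = (1 / (1 - a powr p)) powr (1/p)"
  have \<kappa>: "0 < \<kappa>" "\<kappa> powr p * (1 - m powr p) = 1"
    using m p by (auto simp: \<kappa>_def powr_powr)
  have \<mu>: "0 < \<mu>" "\<mu> powr p * (1 - a powr p) = 1"
    using a p by (auto simp: \<mu>_def powr_powr)
  have "emeasure (lebesgue_n n) {x \<in> lpball n p. m < \<bar>x j\<bar>}
      \<le> ennreal (1 / \<kappa> ^ (n - 1)) * emeasure (lebesgue_n n) (lp_cylinder n p j)"
    using \<kappa> by (intro emeasure_lpball_tail_le_cylinder[OF p j m(1)]) auto
  also have "\<dots> \<le> ennreal (1 / \<kappa> ^ (n - 1)) * (ennreal (\<mu> ^ (n - 1) / a) * emeasure (lebesgue_n n) (lpball n p))"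
    using \<mu> by (intro mult_left_mono emeasure_cylinder_le_lpball[OF p j a(1)]) auto
  also have "\<dots> = ennreal ((\<mu> / \<kappa>) ^ (n - 1) / a) * emeasure (lebesgue_n n) (lpball n p)"
    using \<kappa> \<mu> a by (simp add: mult.assoc[symmetric] ennreal_mult[symmetric] power_divide)
  also have "(\<mu> / \<kappa>) ^ (n - 1) = ((1 - m powr p) / (1 - a powr p)) powr ((real n - 1) / p)"
  proof -
    have "\<mu> / \<kappa> = ((1 - m powr p) / (1 - a powr p)) powr (1 / p)"
      using m a by (simp add: \<kappa>_def \<mu>_def powr_divide)
    then have "(\<mu> / \<kappa>) ^ (n - 1) = ((1 - m powr p) / (1 - a powr p)) powr (real (n - 1) / p)"
      using m a by (simp add: powr_realpow[symmetric] powr_powr)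
    then show ?thesis
      using j by (simp add: of_nat_diff)
  qed
  finally show ?thesis
    using p m a by (intro measure_le_mult_of_emeasure_le fmeasurable_lpball) auto
qed

lemma lpball_tail_factor_le:
  assumes p: "1 \<le> p" and n: "2 \<le> n" and u: "u = (2*p+2) * ln (real n) / (real n - 1)" "u < 1"
  shows "real n * (((1 - u) / (1 - 1 / real n)) powr ((real n - 1) / p) * real n powr (1 / p))
    \<le> exp 1 / real n"
proof -
  have n1: "real n > 1"
    using n by auto
  have ln_n: "ln (real n) \<ge> 0"
    using n1 by simp
  define S where "S = ln (real n) + (real n - 1) / p * (ln (1 - u) - ln (1 - 1 / real n)) + ln (real n) / p"
  have "real n * (((1 - u) / (1 - 1 / real n)) powr ((real n - 1) / p) * real n powr (1 / p)) = exp S"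
    using n1 u by (simp add: S_def powr_def ln_div exp_add)
  also have "S \<le> 1 - ln (real n)"
  proof -
    have l1: "ln (1 - u) \<le> - u"
      using ln_le_minus_one[of "1 - u"] u by simp
    have "- ln (1 - 1 / real n) = ln (real n / (real n - 1))"
      using n1 by (simp add: ln_div field_simps)
    also have "\<dots> \<le> real n / (real n - 1) - 1"
      using n1 by (intro ln_le_minus_one) auto
    also have "\<dots> = 1 / (real n - 1)"
      using n1 by (simp add: field_simps)
    finally have l2: "- ln (1 - 1 / real n) \<le> 1 / (real n - 1)" .
    have "(real n - 1) * (ln (1 - u) - ln (1 - 1 / real n)) \<le> (real n - 1) * (- u + 1 / (real n - 1))"
      using l1 l2 n1 by (intro mult_left_mono) auto
    also have "\<dots> = - (2*p+2) * ln (real n) + 1"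
      using n1 u by (simp add: field_simps)
    finally have "S \<le> ln (real n) + (- (2*p+2) * ln (real n) + 1) / p + ln (real n) / p"
      using p unfolding S_def by (simp add: divide_right_mono)
    also have "\<dots> = - ln (real n) - ln (real n) / p + 1 / p"
      using p by (simp add: field_simps)
    also have "\<dots> \<le> 1 - ln (real n)"
      using p ln_n by (simp add: field_simps)
    finally show ?thesis .
  qed
  finally show ?thesis
    using n1 by (simp add: exp_diff)
qed

text \<open>The thresholds defining typical points: the coordinate threshold is chosen so that
  the union bound over the \<open>n\<close> coordinate tails is \<open>O(1/n)\<close>, the norm threshold so that
  \<open>\<rho>\<^sub>n\<^sup>n \<rightarrow> 0\<close> while \<open>\<rho>\<^sub>n\<^sup>p\<close> is negligible on the logarithmic scale.\<close>

definition coord_threshold :: "real \<Rightarrow> nat \<Rightarrow> real" where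
  "coord_threshold p n = ((2*p+2) * ln (real n) / (real n - 1)) powr (1/p)"

definition norm_threshold :: "nat \<Rightarrow> real" where
  "norm_threshold n = exp (- 1 / sqrt (real n))"

definition lpball_atypical :: "real \<Rightarrow> nat \<Rightarrow> (nat \<Rightarrow> real) set" where
  "lpball_atypical p n =
     {x \<in> lpball n p. lp_sum n p x < norm_threshold n powr p}
     \<union> (\<Union>j<n. {x \<in> lpball n p. coord_threshold p n < \<bar>x j\<bar>})"

lemma lpball_atypical_subset: "lpball_atypical p n \<subseteq> lpball n p"
  unfolding lpball_atypical_def by auto

lemma sets_lpball_atypical: "0 < p \<Longrightarrow> lpball_atypical p n \<in> sets (lebesgue_n n)"
  unfolding lpball_atypical_def by (simp add: lpball_conv_lp_sum) measurable

lemma coord_threshold_pos: "1 \<le> p \<Longrightarrow> 2 \<le> n \<Longrightarrow> 0 < coord_threshold p n"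
  unfolding coord_threshold_def by (auto intro!: divide_pos_pos mult_pos_pos)

lemma measure_lpball_atypical_le:
  assumes p: "1 \<le> p" and n: "2 \<le> n" and u: "(2*p+2) * ln (real n) / (real n - 1) < 1"
  shows "measure (lebesgue_n n) (lpball_atypical p n)
    \<le> (norm_threshold n ^ n + exp 1 / real n) * measure (lebesgue_n n) (lpball n p)"
proof -
  let ?M = "lebesgue_n n" and ?V = "measure (lebesgue_n n) (lpball n p)"
  let ?m = "coord_threshold p n"
  define u where "u = (2*p+2) * ln (real n) / (real n - 1)"
  define a where "a = (1 / real n) powr (1/p)"
  define T where "T = ((1 - u) / (1 - 1 / real n)) powr ((real n - 1) / p) * real n powr (1 / p)"
  have a_pos: "0 < a" and a_powr: "a powr p = 1 / real n" and inv_a: "1 / a = real n powr (1 / p)"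
    using n p by (simp_all add: a_def powr_powr powr_divide)
  then have a_powr_less: "a powr p < 1"
    using n by simp
  have "0 \<le> u"
    using n p by (simp add: u_def)
  then have m_powr: "?m powr p = u"
    using p by (simp add: coord_threshold_def powr_powr flip: u_def)
  have tail_sets: "{x \<in> lpball n p. ?m < \<bar>x j\<bar>} \<in> sets ?M" if "j \<in> {..<n}" for j
    using p that by (simp add: lpball_conv_lp_sum) measurable
  have tails_sets: "(\<Union>j<n. {x \<in> lpball n p. ?m < \<bar>x j\<bar>}) \<in> sets ?M"
    by (rule sets.finite_UN[OF finite_lessThan tail_sets])
  have small_sets: "{x \<in> lpball n p. lp_sum n p x < norm_threshold n powr p} \<in> sets ?M"
    using p by (simp add: lpball_conv_lp_sum)
  have "measure ?M (lpball_atypical p n)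
      \<le> measure ?M {x \<in> lpball n p. lp_sum n p x < norm_threshold n powr p}
        + measure ?M (\<Union>j<n. {x \<in> lpball n p. ?m < \<bar>x j\<bar>})"
    unfolding lpball_atypical_def by (rule measure_Un_le[OF small_sets tails_sets])
  also have "\<dots> \<le> measure ?M {x \<in> lpball n p. lp_sum n p x < norm_threshold n powr p}
        + (\<Sum>j<n. measure ?M {x \<in> lpball n p. ?m < \<bar>x j\<bar>})"
    by (intro add_left_mono measure_UNION_le[OF finite_lessThan tail_sets])
  also have "\<dots> \<le> norm_threshold n ^ n * ?V + (\<Sum>j<n. T * ?V)"
  proof (intro add_mono sum_mono)
    show "measure ?M {x \<in> lpball n p. lp_sum n p x < norm_threshold n powr p} \<le> norm_threshold n ^ n * ?V"
      using p by (intro measure_lpball_small_lp_sum_le) (auto simp: norm_threshold_def)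
    show "measure ?M {x \<in> lpball n p. ?m < \<bar>x j\<bar>} \<le> T * ?V" if "j \<in> {..<n}" for j
      using measure_lpball_tail_le[OF p _ coord_threshold_pos[OF p n] _ a_pos a_powr_less, of j] that u
      by (simp add: T_def m_powr a_powr u_def flip: inv_a)
  qed
  also have "norm_threshold n ^ n * ?V + (\<Sum>j<n. T * ?V) \<le> (norm_threshold n ^ n + exp 1 / real n) * ?V"
  proof -
    have "real n * T \<le> exp 1 / real n"
      using lpball_tail_factor_le[OF p n u_def] u by (simp add: T_def u_def)
    from mult_right_mono[OF this measure_nonneg[of ?M "lpball n p"]] show ?thesis
      by (simp add: algebra_simps)
  qed
  finally show ?thesis .
qed

lemma lpball_atypical_relative_measure_tendsto_0:
  assumes p: "1 \<le> p"
  shows "(\<lambda>n. measure (lebesgue_n n) (lpball_atypical p n) / measure (lebesgue_n n) (lpball n p))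
    \<longlonglongrightarrow> 0"
proof -
  have "(\<lambda>n::nat. (2*p+2) * ln (real n) / (real n - 1)) \<longlonglongrightarrow> 0"
    by real_asymp
  then have "eventually (\<lambda>n. (2*p+2) * ln (real n) / (real n - 1) < 1) sequentially"
    by (rule order_tendstoD) simp
  then have upper: "eventually (\<lambda>n. measure (lebesgue_n n) (lpball_atypical p n) / measure (lebesgue_n n) (lpball n p)
      \<le> norm_threshold n ^ n + exp 1 / real n) sequentially"
    using eventually_ge_at_top[of 2]
  proof eventually_elim
    case (elim n)
    then show ?case
      using measure_lpball_atypical_le[OF p, of n] measure_lpball_pos[OF p, of n]
      by (simp add: divide_le_eq)
  qed
  have "(\<lambda>n::nat. exp (real n * (- 1 / sqrt (real n))) + exp 1 / real n) \<longlonglongrightarrow> 0"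
    by real_asymp
  then have lim: "(\<lambda>n. norm_threshold n ^ n + exp 1 / real n) \<longlonglongrightarrow> 0"
    by (simp add: norm_threshold_def flip: exp_of_nat_mult)
  show ?thesis
    by (rule tendsto_sandwich[OF _ upper tendsto_const lim]) (auto intro: divide_nonneg_nonneg)
qed

section \<open>Comparing \<open>\<ell>\<^sub>q\<close>- and \<open>\<ell>\<^sub>p\<close>-sums of typical points\<close>

lemma mem_scale_lpball_of_coords_le:
  assumes p: "1 \<le> p" and q: "0 < q" and s: "0 < s" and n: "0 < n" and m: "0 < m"
    and x: "x \<in> lpball n p" and x_le: "\<And>j. j < n \<Longrightarrow> \<bar>x j\<bar> \<le> m"
    and ge: "q \<ge> p \<Longrightarrow> (q - p) * ln m \<le> q * ln s"
    and less: "q < p \<Longrightarrow> (1 - q/p) * ln (real n) \<le> q * ln s"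
  shows "x \<in> scale_set n s (lpball n q)"
proof -
  have x_space: "x \<in> space (lebesgue_n n)" and lp: "lp_sum n p x \<le> 1"
    using x p by (auto simp: lpball_conv_lp_sum)
  have "lp_sum n q x \<le> s powr q"
  proof (cases "q \<ge> p")
    case True
    have "lp_sum n q x = lp_sum n (p + (q - p)) x"
      by simp
    also have "\<dots> \<le> m powr (q - p) * lp_sum n p x"
      using True x_le by (intro lp_sum_add_exponent_le) auto
    also have "\<dots> \<le> m powr (q - p) * 1"
      using lp by (intro mult_left_mono) auto
    also have "\<dots> = exp ((q - p) * ln m)"
      using m by (simp add: powr_def)
    also have "\<dots> \<le> exp (q * ln s)"
      using ge True by simp
    finally show ?thesis
      using s by (simp add: powr_def)
  next
    case False
    have "lp_sum n q x \<le> real n powr (1 - q/p) * lp_sum n p x powr (q/p)"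
      using False q n by (intro lp_sum_power_mean) auto
    also have "\<dots> \<le> real n powr (1 - q/p) * 1"
      using lp lp_sum_nonneg[of n p x] q p by (intro mult_left_mono) (auto simp: powr_le_one_iff)
    also have "\<dots> = exp ((1 - q/p) * ln (real n))"
      using n by (simp add: powr_def)
    also have "\<dots> \<le> exp (q * ln s)"
      using less False by simp
    finally show ?thesis
      using s by (simp add: powr_def)
  qed
  then show ?thesis
    using scale_set_lpball_conv_lp_sum[OF s q, of n] x_space by auto
qed

lemma not_mem_scale_lpball_of_coords_le:
  assumes p: "1 \<le> p" and q: "0 < q" and s: "0 \<le> s" and n: "0 < n" and m: "0 < m" and \<rho>: "0 < \<rho>"
    and x: "x \<in> lpball n p" and x_ge: "\<rho> powr p \<le> lp_sum n p x" and x_le: "\<And>j. j < n \<Longrightarrow> \<bar>x j\<bar> \<le> m"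
    and ge: "0 < s \<Longrightarrow> q \<ge> p \<Longrightarrow> (1 - p/q) * ln (real n) + p * ln s < p * ln \<rho>"
    and less: "0 < s \<Longrightarrow> q < p \<Longrightarrow> (p - q) * ln m + q * ln s < p * ln \<rho>"
  shows "x \<notin> scale_set n s (lpball n q)"
proof
  assume "x \<in> scale_set n s (lpball n q)"
  then have lq: "lp_sum n q x \<le> s powr q"
    using lp_sum_le_of_mem_scale_set[OF s q] by blast
  have \<rho>_powr: "\<rho> powr p = exp (p * ln \<rho>)"
    using \<rho> by (simp add: powr_def)
  show False
  proof (cases "s = 0")
    case True
    then have "\<forall>i\<in>{..<n}. \<bar>x i\<bar> powr q = 0"
      using lq lp_sum_nonneg[of n q x]
      unfolding lp_sum_def by (subst sum_nonneg_eq_0_iff[symmetric]) auto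
    then have "lp_sum n p x = 0"
      unfolding lp_sum_def by simp
    then show False
      using x_ge \<rho> by simp
  next
    case False
    then have s: "0 < s"
      using s by simp
    show False
    proof (cases "q \<ge> p")
      case True
      have "lp_sum n p x \<le> real n powr (1 - p/q) * lp_sum n q x powr (p/q)"
        using True p n by (intro lp_sum_power_mean) auto
      also have "\<dots> \<le> real n powr (1 - p/q) * (s powr q) powr (p/q)"
        using lq lp_sum_nonneg[of n q x] p q by (intro mult_left_mono powr_mono2) auto
      also have "\<dots> = exp ((1 - p/q) * ln (real n) + p * ln s)"
        using n s q by (simp add: powr_powr powr_def exp_add)
      also have "\<dots> < \<rho> powr p"
        unfolding \<rho>_powr using ge[OF s True] by simp
      finally show False
        using x_ge by simp
    next
      case False
      have "lp_sum n p x = lp_sum n (q + (p - q)) x"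
        by simp
      also have "\<dots> \<le> m powr (p - q) * lp_sum n q x"
        using False x_le by (intro lp_sum_add_exponent_le) auto
      also have "\<dots> \<le> m powr (p - q) * s powr q"
        using lq by (intro mult_left_mono) auto
      also have "\<dots> = exp ((p - q) * ln m + q * ln s)"
        using m s by (simp add: powr_def exp_add)
      also have "\<dots> < \<rho> powr p"
        unfolding \<rho>_powr using less[OF s] False by simp
      finally show False
        using x_ge by simp
    qed
  qed
qed

lemma eventually_less_of_tendsto:
  fixes f g :: "'a \<Rightarrow> real"
  assumes "(f \<longlongrightarrow> a) F" "(g \<longlongrightarrow> b) F" "a < b"
  shows "eventually (\<lambda>x. f x < g x) F"
  using order_tendstoD(2)[OF tendsto_diff[OF assms(1,2)], of 0] assms(3) by simp

lemma ln_coord_threshold_over_ln_tendsto: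
  assumes p: "1 \<le> p"
  shows "(\<lambda>n. ln (coord_threshold p n) / ln (real n)) \<longlonglongrightarrow> -1/p"
proof -
  have "(\<lambda>n::nat. ln (2*p+2) / ln (real n)) \<longlonglongrightarrow> 0"
    by real_asymp
  moreover have "(\<lambda>n::nat. (ln (ln (real n)) - ln (real n - 1)) / ln (real n)) \<longlonglongrightarrow> -1"
    by real_asymp
  ultimately have "(\<lambda>n. (1/p) * (ln (2*p+2) / ln (real n) + (ln (ln (real n)) - ln (real n - 1)) / ln (real n)))
      \<longlonglongrightarrow> (1/p) * (0 + -1)"
    by (intro tendsto_intros)
  moreover have "eventually (\<lambda>n. (1/p) * (ln (2*p+2) / ln (real n) + (ln (ln (real n)) - ln (real n - 1)) / ln (real n))
      = ln (coord_threshold p n) / ln (real n)) sequentially"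
    using eventually_ge_at_top[of 3]
  proof eventually_elim
    case (elim n)
    then have n: "real n \<ge> 3"
      by simp
    then have "0 < ln (real n)"
      by simp
    then have "ln (coord_threshold p n) = (1/p) * (ln (2*p+2) + (ln (ln (real n)) - ln (real n - 1)))"
      using n p by (simp add: coord_threshold_def ln_powr ln_div ln_mult)
    then have "ln (coord_threshold p n) / ln (real n)
        = (1/p) * ((ln (2*p+2) + (ln (ln (real n)) - ln (real n - 1))) / ln (real n))"
      by simp
    then show ?case
      by (simp add: add_divide_distrib)
  qed
  ultimately show ?thesis
    by (simp add: Lim_transform_eventually)
qed

lemma critical_exponent_limits:
  fixes \<alpha> :: real and \<epsilon> q :: "nat \<Rightarrow> real"
  assumes p: "1 \<le> p" and q: "\<And>n. q n = p + (\<alpha> + \<epsilon> n) / ln (real n)" and \<epsilon>: "\<epsilon> \<longlonglongrightarrow> 0"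
  shows "q \<longlonglongrightarrow> p"
    and "(\<lambda>n. (q n - p) * ln (coord_threshold p n)) \<longlonglongrightarrow> - \<alpha> / p"
    and "(\<lambda>n. (1 - q n / p) * ln (real n)) \<longlonglongrightarrow> - \<alpha> / p"
    and "(\<lambda>n. (1 - p / q n) * ln (real n)) \<longlonglongrightarrow> \<alpha> / p"
    and "eventually (\<lambda>n. 0 < q n) sequentially"
proof -
  have a: "(\<lambda>n. \<alpha> + \<epsilon> n) \<longlonglongrightarrow> \<alpha>"
    using tendsto_add[OF tendsto_const \<epsilon>] by simp
  have "(\<lambda>n::nat. 1 / ln (real n)) \<longlonglongrightarrow> 0"
    by real_asymp
  then have "(\<lambda>n. p + (\<alpha> + \<epsilon> n) * (1 / ln (real n))) \<longlonglongrightarrow> p + \<alpha> * 0"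
    by (intro tendsto_intros a)
  moreover have "q = (\<lambda>n. p + (\<alpha> + \<epsilon> n) * (1 / ln (real n)))"
    using q by auto
  ultimately show q_lim: "q \<longlonglongrightarrow> p"
    by simp
  have q_diff: "eventually (\<lambda>n. q n - p = (\<alpha> + \<epsilon> n) / ln (real n) \<and> 0 < ln (real n)) sequentially"
    using eventually_ge_at_top[of 2] by eventually_elim (simp add: q)
  have "(\<lambda>n. (\<alpha> + \<epsilon> n) * (ln (coord_threshold p n) / ln (real n))) \<longlonglongrightarrow> \<alpha> * (-1/p)"
    by (intro tendsto_intros a ln_coord_threshold_over_ln_tendsto p)
  moreover have "eventually (\<lambda>n. (\<alpha> + \<epsilon> n) * (ln (coord_threshold p n) / ln (real n))
      = (q n - p) * ln (coord_threshold p n)) sequentially"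
    using q_diff by eventually_elim simp
  ultimately show "(\<lambda>n. (q n - p) * ln (coord_threshold p n)) \<longlonglongrightarrow> - \<alpha> / p"
    by (simp add: Lim_transform_eventually)
  have "(\<lambda>n. - (\<alpha> + \<epsilon> n) / p) \<longlonglongrightarrow> - \<alpha> / p"
    using p by (intro tendsto_intros a) auto
  moreover have "eventually (\<lambda>n. - (\<alpha> + \<epsilon> n) / p = (1 - q n / p) * ln (real n)) sequentially"
    using q_diff by eventually_elim (use p in \<open>auto simp: field_simps\<close>)
  ultimately show "(\<lambda>n. (1 - q n / p) * ln (real n)) \<longlonglongrightarrow> - \<alpha> / p"
    by (rule Lim_transform_eventually)
  show q_pos: "eventually (\<lambda>n. 0 < q n) sequentially"
    using q_lim p by (intro order_tendstoD) auto
  have "(\<lambda>n. (\<alpha> + \<epsilon> n) / q n) \<longlonglongrightarrow> \<alpha> / p"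
    using p by (intro tendsto_intros a q_lim) auto
  moreover from q_pos q_diff have "eventually (\<lambda>n. (\<alpha> + \<epsilon> n) / q n = (1 - p / q n) * ln (real n)) sequentially"
    by eventually_elim (auto simp: field_simps)
  ultimately show "(\<lambda>n. (1 - p / q n) * ln (real n)) \<longlonglongrightarrow> \<alpha> / p"
    by (rule Lim_transform_eventually)
qed

lemma eventually_above_critical_exponent:
  fixes \<alpha> s :: real and \<epsilon> q :: "nat \<Rightarrow> real"
  assumes p: "1 \<le> p" and q: "\<And>n. q n = p + (\<alpha> + \<epsilon> n) / ln (real n)" and \<epsilon>: "\<epsilon> \<longlonglongrightarrow> 0"
    and s: "exp (- \<alpha> / p\<^sup>2) < s"
  shows "eventually (\<lambda>n. (q n - p) * ln (coord_threshold p n) < q n * ln s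
    \<and> (1 - q n / p) * ln (real n) < q n * ln s) sequentially"
proof -
  note lim = critical_exponent_limits[OF p q \<epsilon>]
  have "- \<alpha> / p\<^sup>2 < ln s"
    using s by (metis exp_gt_zero ln_exp ln_less_cancel_iff order.strict_trans)
  then have crit: "- \<alpha> / p < p * ln s"
    using p by (simp add: field_simps power2_eq_square)
  have q_ln_s: "(\<lambda>n. q n * ln s) \<longlonglongrightarrow> p * ln s"
    by (intro tendsto_intros lim(1))
  show ?thesis
    using eventually_less_of_tendsto[OF lim(2) q_ln_s crit] eventually_less_of_tendsto[OF lim(3) q_ln_s crit]
    by eventually_elim simp
qed

lemma eventually_below_critical_exponent:
  fixes \<alpha> s :: real and \<epsilon> q :: "nat \<Rightarrow> real"
  assumes p: "1 \<le> p" and q: "\<And>n. q n = p + (\<alpha> + \<epsilon> n) / ln (real n)" and \<epsilon>: "\<epsilon> \<longlonglongrightarrow> 0"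
    and s: "0 < s" "s < exp (- \<alpha> / p\<^sup>2)"
  shows "eventually (\<lambda>n. (1 - p / q n) * ln (real n) + p * ln s < p * ln (norm_threshold n)
    \<and> (p - q n) * ln (coord_threshold p n) + q n * ln s < p * ln (norm_threshold n)) sequentially"
proof -
  note lim = critical_exponent_limits[OF p q \<epsilon>]
  have "(\<lambda>n::nat. p * (- 1 / sqrt (real n))) \<longlonglongrightarrow> p * 0"
    by (intro tendsto_intros) real_asymp
  then have ln_threshold: "(\<lambda>n. p * ln (norm_threshold n)) \<longlonglongrightarrow> 0"
    by (simp add: norm_threshold_def)
  have "ln s < - \<alpha> / p\<^sup>2"
    using s by (metis ln_exp ln_less_cancel_iff exp_gt_zero)
  then have crit: "\<alpha> / p + p * ln s < 0"
    using p by (simp add: field_simps power2_eq_square)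
  have "(\<lambda>n. (1 - p / q n) * ln (real n) + p * ln s) \<longlonglongrightarrow> \<alpha> / p + p * ln s"
    by (intro tendsto_add lim(4) tendsto_const)
  note less1 = eventually_less_of_tendsto[OF this ln_threshold crit]
  have "(\<lambda>n. (p - q n) * ln (coord_threshold p n) + q n * ln s) \<longlonglongrightarrow> \<alpha> / p + p * ln s"
    using tendsto_add[OF tendsto_minus[OF lim(2)] tendsto_mult_right[OF lim(1), of "ln s"]]
    by (simp add: algebra_simps)
  note less2 = eventually_less_of_tendsto[OF this ln_threshold crit]
  from less1 less2 show ?thesis
    by eventually_elim simp
qed

lemma sets_scale_set_lpball: "0 < t \<Longrightarrow> 0 < r \<Longrightarrow> scale_set n t (lpball n r) \<in> sets (lebesgue_n n)"
  by (simp add: scale_set_lpball_conv_lp_sum)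

lemma eventually_lpball_typical_subset_scale_lpball:
  fixes \<alpha> s :: real and \<epsilon> q :: "nat \<Rightarrow> real"
  assumes p: "1 \<le> p" and q: "\<And>n. q n = p + (\<alpha> + \<epsilon> n) / ln (real n)" and \<epsilon>: "\<epsilon> \<longlonglongrightarrow> 0"
    and s: "exp (- \<alpha> / p\<^sup>2) < s"
  shows "eventually (\<lambda>n. scale_set n s (lpball n (q n)) \<in> sets (lebesgue_n n)
    \<and> lpball n p - lpball_atypical p n \<subseteq> scale_set n s (lpball n (q n))) sequentially"
  using eventually_above_critical_exponent[OF p q \<epsilon> s] critical_exponent_limits(5)[OF p q \<epsilon>]
    eventually_ge_at_top[of 2]
proof eventually_elim
  case (elim n)
  have s_pos: "0 < s"
    using s exp_gt_zero order.strict_trans by blast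
  have "x \<in> scale_set n s (lpball n (q n))" if x: "x \<in> lpball n p - lpball_atypical p n" for x
  proof (rule mem_scale_lpball_of_coords_le[OF p _ s_pos _ coord_threshold_pos[OF p]])
    show "\<bar>x j\<bar> \<le> coord_threshold p n" if "j < n" for j
      using x that by (auto simp: lpball_atypical_def not_less)
  qed (use elim x in auto)
  then show ?case
    using elim s_pos by (auto intro: sets_scale_set_lpball)
qed

lemma eventually_lpball_inter_scale_lpball_subset_atypical:
  fixes \<alpha> s :: real and \<epsilon> q :: "nat \<Rightarrow> real"
  assumes p: "1 \<le> p" and q: "\<And>n. q n = p + (\<alpha> + \<epsilon> n) / ln (real n)" and \<epsilon>: "\<epsilon> \<longlonglongrightarrow> 0"
    and s: "0 \<le> s" "s < exp (- \<alpha> / p\<^sup>2)"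
  shows "eventually (\<lambda>n. lpball n p \<inter> scale_set n s (lpball n (q n)) \<subseteq> lpball_atypical p n) sequentially"
proof -
  have "eventually (\<lambda>n. 0 < s \<longrightarrow> (1 - p / q n) * ln (real n) + p * ln s < p * ln (norm_threshold n)
      \<and> (p - q n) * ln (coord_threshold p n) + q n * ln s < p * ln (norm_threshold n)) sequentially"
  proof (cases "s = 0")
    case False
    with s have "0 < s"
      by simp
    from eventually_below_critical_exponent[OF p q \<epsilon> this s(2)] show ?thesis
      by eventually_elim simp
  qed simp
  then show ?thesis
    using critical_exponent_limits(5)[OF p q \<epsilon>] eventually_ge_at_top[of 2]
  proof eventually_elim
    case (elim n)
    show ?case
    proof (rule subsetI, rule ccontr)
      fix x
      assume x: "x \<in> lpball n p \<inter> scale_set n s (lpball n (q n))" and "x \<notin> lpball_atypical p n"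
      then have "norm_threshold n powr p \<le> lp_sum n p x" "\<And>j. j < n \<Longrightarrow> \<bar>x j\<bar> \<le> coord_threshold p n"
        by (auto simp: lpball_atypical_def not_less)
      with x elim have "x \<notin> scale_set n s (lpball n (q n))"
        by (intro not_mem_scale_lpball_of_coords_le[OF p _ s(1) _ coord_threshold_pos[OF p]])
           (auto simp: norm_threshold_def)
      with x show False
        by simp
    qed
  qed
qed

lemma relative_measure_tendsto_1:
  assumes B: "\<And>n. B n \<in> fmeasurable (M n)" "\<And>n. 0 < measure (M n) (B n)"
    and E: "\<And>n. E n \<in> sets (M n)" "\<And>n. E n \<subseteq> B n"
    and E_small: "(\<lambda>n. measure (M n) (E n) / measure (M n) (B n)) \<longlonglongrightarrow> 0"
    and X: "eventually (\<lambda>n. X n \<in> sets (M n) \<and> B n - E n \<subseteq> X n \<and> X n \<subseteq> B n) sequentially"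
  shows "(\<lambda>n. measure (M n) (X n) / measure (M n) (B n)) \<longlonglongrightarrow> 1"
proof -
  have bounds: "eventually (\<lambda>n. 1 - measure (M n) (E n) / measure (M n) (B n)
      \<le> measure (M n) (X n) / measure (M n) (B n)
    \<and> measure (M n) (X n) / measure (M n) (B n) \<le> 1) sequentially"
    using X
  proof eventually_elim
    case (elim n)
    then have X_fin: "X n \<in> fmeasurable (M n)"
      by (intro fmeasurableI2[OF B(1)]) auto
    have "measure (M n) (B n) - measure (M n) (E n) = measure (M n) (B n - E n)"
      using B(1)[of n] E[of n] by (intro measure_Diff[symmetric]) (auto simp: fmeasurable_def)
    also have "\<dots> \<le> measure (M n) (X n)"
      using elim B(1)[of n] E(1)[of n] X_fin by (intro measure_mono_fmeasurable) auto
    finally have diff_le: "measure (M n) (B n) - measure (M n) (E n) \<le> measure (M n) (X n)" .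
    have "1 - measure (M n) (E n) / measure (M n) (B n)
        = (measure (M n) (B n) - measure (M n) (E n)) / measure (M n) (B n)"
      using B(2)[of n] by (simp add: diff_divide_distrib)
    also have "\<dots> \<le> measure (M n) (X n) / measure (M n) (B n)"
      using diff_le B(2)[of n] by (intro divide_right_mono) auto
    finally have lower: "1 - measure (M n) (E n) / measure (M n) (B n) \<le> measure (M n) (X n) / measure (M n) (B n)" .
    have "measure (M n) (X n) \<le> measure (M n) (B n)"
      using elim by (intro measure_le_of_subset_fmeasurable B(1)) auto
    with B(2)[of n] lower show ?case
      by simp
  qed
  have lim: "(\<lambda>n. 1 - measure (M n) (E n) / measure (M n) (B n)) \<longlonglongrightarrow> 1"
    using tendsto_diff[OF tendsto_const E_small, of 1] by simp
  from bounds have lower: "eventually (\<lambda>n. 1 - measure (M n) (E n) / measure (M n) (B n)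
      \<le> measure (M n) (X n) / measure (M n) (B n)) sequentially"
    by eventually_elim simp
  from bounds have upper: "eventually (\<lambda>n. measure (M n) (X n) / measure (M n) (B n) \<le> 1) sequentially"
    by eventually_elim simp
  show ?thesis
    by (rule tendsto_sandwich[OF lower upper lim tendsto_const])
qed

lemma relative_measure_tendsto_0:
  assumes B: "\<And>n. B n \<in> fmeasurable (M n)"
    and E: "\<And>n. E n \<in> sets (M n)" "\<And>n. E n \<subseteq> B n"
    and E_small: "(\<lambda>n. measure (M n) (E n) / measure (M n) (B n)) \<longlonglongrightarrow> 0"
    and X: "eventually (\<lambda>n. X n \<subseteq> E n) sequentially"
  shows "(\<lambda>n. measure (M n) (X n) / measure (M n) (B n)) \<longlonglongrightarrow> 0"
proof (rule tendsto_sandwich[OF _ _ tendsto_const E_small])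
  show "eventually (\<lambda>n. measure (M n) (X n) / measure (M n) (B n)
      \<le> measure (M n) (E n) / measure (M n) (B n)) sequentially"
    using X
  proof eventually_elim
    case (elim n)
    have "E n \<in> fmeasurable (M n)"
      by (rule fmeasurableI2[OF B(1) E(2) E(1)])
    then have "measure (M n) (X n) \<le> measure (M n) (E n)"
      using elim by (rule measure_le_of_subset_fmeasurable[rotated])
    then show ?case
      by (simp add: divide_right_mono)
  qed
qed simp

lemma relative_measure_lpball_inter_scale_lpballs_tendsto_1:
  fixes I :: "nat set" and \<alpha> s :: "nat \<Rightarrow> real" and \<epsilon> q :: "nat \<Rightarrow> nat \<Rightarrow> real"
  assumes p: "1 \<le> p" and I: "finite I"
    and q: "\<And>i n. i \<in> I \<Longrightarrow> q i n = p + (\<alpha> i + \<epsilon> i n) / ln (real n)"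
    and \<epsilon>: "\<And>i. i \<in> I \<Longrightarrow> \<epsilon> i \<longlonglongrightarrow> 0"
    and s: "\<And>i. i \<in> I \<Longrightarrow> exp (- \<alpha> i / p\<^sup>2) < s i"
  shows "(\<lambda>n. measure (lebesgue_n n) (lpball n p \<inter> (\<Inter>i\<in>I. scale_set n (s i) (lpball n (q i n))))
    / measure (lebesgue_n n) (lpball n p)) \<longlonglongrightarrow> 1"
proof (rule relative_measure_tendsto_1[OF fmeasurable_lpball[OF p] measure_lpball_pos[OF p]
      sets_lpball_atypical lpball_atypical_subset lpball_atypical_relative_measure_tendsto_0[OF p]])
  show "0 < p"
    using p by simp
  have "eventually (\<lambda>n. \<forall>i\<in>I. scale_set n (s i) (lpball n (q i n)) \<in> sets (lebesgue_n n)
      \<and> lpball n p - lpball_atypical p n \<subseteq> scale_set n (s i) (lpball n (q i n))) sequentially"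
    using I eventually_lpball_typical_subset_scale_lpball[OF p q \<epsilon> s]
    by (intro eventually_ball_finite) auto
  then show "eventually (\<lambda>n. lpball n p \<inter> (\<Inter>i\<in>I. scale_set n (s i) (lpball n (q i n))) \<in> sets (lebesgue_n n)
      \<and> lpball n p - lpball_atypical p n \<subseteq> lpball n p \<inter> (\<Inter>i\<in>I. scale_set n (s i) (lpball n (q i n)))
      \<and> lpball n p \<inter> (\<Inter>i\<in>I. scale_set n (s i) (lpball n (q i n))) \<subseteq> lpball n p) sequentially"
  proof eventually_elim
    case (elim n)
    have "lpball n p \<inter> (\<Inter>i\<in>I. scale_set n (s i) (lpball n (q i n))) \<in> sets (lebesgue_n n)"
    proof (cases "I = {}")
      case False
      with I elim have "(\<Inter>i\<in>I. scale_set n (s i) (lpball n (q i n))) \<in> sets (lebesgue_n n)"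
        by (intro sets.finite_INT) auto
      then show ?thesis
        using p by (intro sets.Int sets_lpball) auto
    qed (use p in \<open>simp add: sets_lpball\<close>)
    with elim show ?case
      by blast
  qed
qed

lemma relative_measure_lpball_inter_scale_lpballs_tendsto_0:
  fixes I :: "nat set" and \<alpha> s :: "nat \<Rightarrow> real" and \<epsilon> q :: "nat \<Rightarrow> nat \<Rightarrow> real"
  assumes p: "1 \<le> p" and i: "i \<in> I"
    and q: "\<And>n. q i n = p + (\<alpha> i + \<epsilon> i n) / ln (real n)" and \<epsilon>: "\<epsilon> i \<longlonglongrightarrow> 0"
    and s: "0 \<le> s i" "s i < exp (- \<alpha> i / p\<^sup>2)"
  shows "(\<lambda>n. measure (lebesgue_n n) (lpball n p \<inter> (\<Inter>i\<in>I. scale_set n (s i) (lpball n (q i n))))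
    / measure (lebesgue_n n) (lpball n p)) \<longlonglongrightarrow> 0"
proof (rule relative_measure_tendsto_0[OF fmeasurable_lpball[OF p] sets_lpball_atypical
      lpball_atypical_subset lpball_atypical_relative_measure_tendsto_0[OF p]])
  show "0 < p"
    using p by simp
  show "eventually (\<lambda>n. lpball n p \<inter> (\<Inter>i\<in>I. scale_set n (s i) (lpball n (q i n))) \<subseteq> lpball_atypical p n)
      sequentially"
    using eventually_lpball_inter_scale_lpball_subset_atypical[OF p q \<epsilon> s]
    by eventually_elim (use i in blast)
qed

theorem proposition2p4:
  fixes d :: nat and p :: real
    and \<alpha> :: "nat \<Rightarrow> real" and \<epsilon> :: "nat \<Rightarrow> nat \<Rightarrow> real"
    and q :: "nat \<Rightarrow> nat \<Rightarrow> real" and s :: "nat \<Rightarrow> real"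
  assumes p: "1 \<le> p"
    and q_def: "\<And>i n. i < d \<Longrightarrow> q i n = p + (\<alpha> i + \<epsilon> i n) / ln (real n)"
    and eps: "\<And>i. i < d \<Longrightarrow> \<epsilon> i \<longlonglongrightarrow> 0"
    and q_ge: "\<And>i n. i < d \<Longrightarrow> n \<ge> 2 \<Longrightarrow> q i n \<ge> 1"
    and s_nonneg: "\<And>i. i < d \<Longrightarrow> s i \<ge> 0"
  defines "Igt \<equiv> {i. i < d \<and> s i > exp (- \<alpha> i / p\<^sup>2)}"
    and "Ilt \<equiv> {i. i < d \<and> s i < exp (- \<alpha> i / p\<^sup>2)}"
  shows "(card Igt = d \<longrightarrow>
           ((\<lambda>n. voln n (lpball n p \<inter> (\<Inter>i\<in>{..<d}. scale_set n (s i) (lpball n (q i n))))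
                  / voln n (lpball n p)) \<longlonglongrightarrow> 1))
       \<and> (card Ilt \<ge> 1 \<longrightarrow>
           ((\<lambda>n. voln n (lpball n p \<inter> (\<Inter>i\<in>{..<d}. scale_set n (s i) (lpball n (q i n))))
                  / voln n (lpball n p)) \<longlonglongrightarrow> 0))"
  unfolding voln_def
proof (intro conjI impI)
  assume "card Igt = d"
  then have "Igt = {..<d}"
    by (intro card_subset_eq) (auto simp: Igt_def)
  then have "exp (- \<alpha> i / p\<^sup>2) < s i" if "i < d" for i
    using that unfolding Igt_def by blast
  then show "(\<lambda>n. measure (lebesgue_n n) (lpball n p \<inter> (\<Inter>i\<in>{..<d}. scale_set n (s i) (lpball n (q i n))))
      / measure (lebesgue_n n) (lpball n p)) \<longlonglongrightarrow> 1"
    using q_def eps by (intro relative_measure_lpball_inter_scale_lpballs_tendsto_1[OF p]) auto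
next
  assume "1 \<le> card Ilt"
  then obtain i where "i \<in> Ilt"
    by fastforce
  then show "(\<lambda>n. measure (lebesgue_n n) (lpball n p \<inter> (\<Inter>i\<in>{..<d}. scale_set n (s i) (lpball n (q i n))))
      / measure (lebesgue_n n) (lpball n p)) \<longlonglongrightarrow> 0"
    unfolding Ilt_def using q_def eps s_nonneg
    by (intro relative_measure_lpball_inter_scale_lpballs_tendsto_0[OF p, of i]) auto
qed

end
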